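(* Let $D$ be an integral domain with quotient field $K$, $n\ge1$, and $f\in(T_n(K))[x]$. Then $f(C)\in T_n(D)$ for all $C\in T_n(D)$ if and only if $f_{ij}\in\mathrm{Int}_K(T_{n-j+1}(D))$ for all $1\le i\le j\le n$; and $f(C)_\ell\in T_n(D)$ for all $C\in T_n(D)$ if and only if $f_{ij}\in\mathrm{Int}_K(T_i(D))$ for all $1\le i\le j\le n$. Equivalently, under the identification of $(T_n(K))[x]$ with $T_n(K[x])$ via $f\mapsto(f_{ij})$, $\mathrm{Int}_{T_n(K)}(T_n(D))$ is the set of upper triangular matrices whose $(i,j)$-entry ($i\le j$) lies in $\mathrm{Int}_K(T_{n-j+1}(D))$, and $\mathrm{Int}^{\ell}_{T_n(K)}(T_n(D))$ is the set of upper triangular matrices whose $(i,j)$-entry ($i\le j$) lies in $\mathrm{Int}_K(T_i(D))$.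
   Context: $T_n(A)$ denotes the ring of upper triangular $n\times n$ matrices over a ring $A$. For $f=\sum_k F_kx^k\in(T_n(K))[x]$ with $F_k\in T_n(K)$, right substitution is $f(C)=\sum_kF_kC^k$ and left substitution is $f(C)_\ell=\sum_kC^kF_k$. Writing $f_{ij}^{(k)}$ for the $(i,j)$-entry of $F_k$, set $f_{ij}=\sum_k f_{ij}^{(k)}x^k\in K[x]$; the map $f\mapsto(f_{ij})$ is a ring isomorphism $(T_n(K))[x]\to T_n(K[x])$. For $m\ge1$, $\mathrm{Int}_K(T_m(D))=\{g\in K[x]\mid\forall C\in T_m(D):\ g(C)\in T_m(D)\}$ (usual evaluation). $\mathrm{Int}_{T_n(K)}(T_n(D))=\{f\in(T_n(K))[x]\mid\forall C\in T_n(D):\ f(C)\in T_n(D)\}$ and $\mathrm{Int}^{\ell}_{T_n(K)}(T_n(D))=\{f\in(T_n(K))[x]\mid\forall C\in T_n(D):\ f(C)_\ell\in T_n(D)\}$. *)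

theory Defs
  imports "HOL-Computational_Algebra.Polynomial"
begin

text \<open>Matrices are functions nat => nat => 'a, indices 0-based (paper index i corresponds to i-1 here);
  an m x m matrix is represented canonically: entries outside {0..<m}^2 are 0.\<close>

type_synonym 'a sqmat = "nat \<Rightarrow> nat \<Rightarrow> 'a"

definition tri :: "nat \<Rightarrow> 'a::zero set \<Rightarrow> 'a sqmat set" where
  "tri m S = {A. (\<forall>i j. A i j \<noteq> 0 \<longrightarrow> i \<le> j \<and> j < m) \<and> (\<forall>i j. i \<le> j \<and> j < m \<longrightarrow> A i j \<in> S)}"

definition mmul :: "nat \<Rightarrow> 'a::comm_ring_1 sqmat \<Rightarrow> 'a sqmat \<Rightarrow> 'a sqmat" where
  "mmul m A B = (\<lambda>i j. \<Sum>l<m. A i l * B l j)"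

definition mone :: "nat \<Rightarrow> 'a::comm_ring_1 sqmat" where
  "mone m = (\<lambda>i j. if i = j \<and> i < m then 1 else 0)"

fun mpow :: "nat \<Rightarrow> 'a::comm_ring_1 sqmat \<Rightarrow> nat \<Rightarrow> 'a sqmat" where
  "mpow m C 0 = mone m"
| "mpow m C (Suc k) = mmul m (mpow m C k) C"

definition poly_mat :: "nat \<Rightarrow> 'a::comm_ring_1 poly \<Rightarrow> 'a sqmat \<Rightarrow> 'a sqmat" where
  "poly_mat m g C = (\<lambda>i j. \<Sum>k\<le>degree g. coeff g k * mpow m C k i j)"

definition IntK_T :: "nat \<Rightarrow> 'a::field set \<Rightarrow> 'a poly set" where
  "IntK_T m D = {g. \<forall>C \<in> tri m D. poly_mat m g C \<in> tri m D}"

text \<open>A polynomial f = sum_k F_k x^k in (T_n(K))[x] is given by its coefficient matrices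
  F :: nat => 'a sqmat, with F k = 0 for k > N.
  Right substitution f(C) = sum_k F_k C^k, left substitution f(C)_l = sum_k C^k F_k.\<close>
definition right_subst :: "nat \<Rightarrow> nat \<Rightarrow> (nat \<Rightarrow> 'a::comm_ring_1 sqmat) \<Rightarrow> 'a sqmat \<Rightarrow> 'a sqmat" where
  "right_subst n N F C = (\<lambda>i j. \<Sum>k\<le>N. mmul n (F k) (mpow n C k) i j)"

definition left_subst :: "nat \<Rightarrow> nat \<Rightarrow> (nat \<Rightarrow> 'a::comm_ring_1 sqmat) \<Rightarrow> 'a sqmat \<Rightarrow> 'a sqmat" where
  "left_subst n N F C = (\<lambda>i j. \<Sum>k\<le>N. mmul n (mpow n C k) (F k) i j)"

definition entry_poly :: "nat \<Rightarrow> (nat \<Rightarrow> 'a::comm_ring_1 sqmat) \<Rightarrow> nat \<Rightarrow> nat \<Rightarrow> 'a poly" where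
  "entry_poly N F i j = (\<Sum>k\<le>N. monom (F k i j) k)"

text \<open>D is a subring of the field K (hence an integral domain) whose quotient field is K.\<close>
definition is_domain_with_quotient_field :: "'a::field set \<Rightarrow> bool" where
  "is_domain_with_quotient_field D \<longleftrightarrow>
     0 \<in> D \<and> 1 \<in> D \<and> (\<forall>a\<in>D. \<forall>b\<in>D. a + b \<in> D \<and> a - b \<in> D \<and> a * b \<in> D) \<and>
     (\<forall>x. \<exists>a\<in>D. \<exists>b\<in>D. b \<noteq> 0 \<and> x = a / b)"

end

theory Submission
  imports Defs
begin

text \<open>Entrywise, \<open>f(C)\<^sub>i\<^sub>j = \<Sum>\<^sub>l f\<^sub>i\<^sub>l(C)\<^sub>l\<^sub>j\<close>, and for triangular \<open>C\<close> the entry \<open>(l, j)\<close> of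
  \<open>g(C)\<close> only depends on the diagonal block of \<open>C\<close> on the indices \<open>l..n-1\<close>, which is an arbitrary
  element of \<open>T\<^sub>n\<^sub>-\<^sub>l(D)\<close>; this gives sufficiency for right substitution. Necessity follows by
  downward induction on \<open>j\<close>, testing with matrices supported on a diagonal block starting at
  row \<open>j\<close>, which isolate the term of \<open>f\<^sub>i\<^sub>j\<close>. Left substitution is reduced to right substitution
  by the anti-automorphism \<open>A \<mapsto> J A\<^sup>T J\<close>, which moves the entry \<open>(i, j)\<close> to \<open>(n-1-j, n-1-i)\<close>.\<close>

lemma tri_UNIV_iff: "A \<in> tri n UNIV \<longleftrightarrow> (\<forall>i j. A i j \<noteq> 0 \<longrightarrow> i \<le> j \<and> j < n)"
  by (simp add: tri_def)

lemma tri_iff: "A \<in> tri n S \<longleftrightarrow> A \<in> tri n UNIV \<and> (\<forall>i j. i \<le> j \<and> j < n \<longrightarrow> A i j \<in> S)"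
  by (auto simp: tri_def)

lemma tri_UNIV_if_tri: "A \<in> tri n S \<Longrightarrow> A \<in> tri n UNIV"
  by (auto simp: tri_def)

lemma tri_entry_zero: "A \<in> tri n UNIV \<Longrightarrow> \<not> (i \<le> j \<and> j < n) \<Longrightarrow> A i j = 0"
  by (auto simp: tri_def)

lemma tri_entry_mem: "A \<in> tri n S \<Longrightarrow> 0 \<in> S \<Longrightarrow> A i j \<in> S"
  unfolding tri_def by (cases "A i j = 0") auto

lemma tri_sum:
  assumes "\<And>k. k \<in> K \<Longrightarrow> X k \<in> tri n UNIV"
  shows "(\<lambda>i j. \<Sum>k\<in>K. X k i j) \<in> tri n UNIV"
  unfolding tri_UNIV_iff
proof (intro allI impI)
  fix i j assume "(\<Sum>k\<in>K. X k i j) \<noteq> 0"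
  then obtain k where "k \<in> K" "X k i j \<noteq> 0"
    by (rule sum.not_neutral_contains_not_neutral)
  then show "i \<le> j \<and> j < n" using assms unfolding tri_UNIV_iff by blast
qed

lemma mone_tri: "mone n \<in> tri n UNIV"
  by (auto simp: tri_def mone_def)

lemma mmul_tri:
  assumes "A \<in> tri n UNIV" "B \<in> tri n UNIV"
  shows "mmul n A B \<in> tri n UNIV"
  unfolding mmul_def
proof (rule tri_sum)
  fix l show "(\<lambda>i j. A i l * B l j) \<in> tri n UNIV"
    unfolding tri_UNIV_iff
  proof (intro allI impI)
    fix i j assume "A i l * B l j \<noteq> 0"
    then have "A i l \<noteq> 0" "B l j \<noteq> 0" by auto
    then have "i \<le> l" "l \<le> j \<and> j < n"
      using assms unfolding tri_UNIV_iff by blast+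
    then show "i \<le> j \<and> j < n" by simp
  qed
qed

lemma mpow_tri: "A \<in> tri n UNIV \<Longrightarrow> mpow n A k \<in> tri n UNIV"
  by (induction k) (auto intro: mmul_tri mone_tri)

lemma poly_mat_tri:
  assumes "C \<in> tri n UNIV" shows "poly_mat n g C \<in> tri n UNIV"
  unfolding poly_mat_def
proof (rule tri_sum)
  fix k show "(\<lambda>i j. coeff g k * mpow n C k i j) \<in> tri n UNIV"
    using mpow_tri[OF assms, of k] unfolding tri_UNIV_iff by (metis mult_zero_right)
qed

lemma mmul_assoc: "mmul n (mmul n A B) C = mmul n A (mmul n B C)"
proof -
  have "(\<Sum>m<n. (\<Sum>l<n. A i l * B l m) * C m j) = (\<Sum>l<n. A i l * (\<Sum>m<n. B l m * C m j))" for i j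
    unfolding sum_distrib_left sum_distrib_right mult.assoc by (rule sum.swap)
  then show ?thesis by (simp add: mmul_def)
qed

lemma mmul_mone_left:
  assumes "A \<in> tri n UNIV" shows "mmul n (mone n) A = A"
proof (intro ext)
  fix i j
  have "mmul n (mone n) A i j = (if i < n then A i j else 0)"
    unfolding mmul_def mone_def by (simp add: if_distrib[where f="\<lambda>x. x * _"] cong: if_cong)
  then show "mmul n (mone n) A i j = A i j"
    using tri_entry_zero[OF assms, of i j] by auto
qed

lemma mmul_mone_right:
  assumes "A \<in> tri n UNIV" shows "mmul n A (mone n) = A"
proof (intro ext)
  fix i j
  have "mmul n A (mone n) i j = (if j < n then A i j else 0)"
    unfolding mmul_def mone_def by (simp add: if_distrib[where f="\<lambda>x. _ * x"] cong: if_cong)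
  then show "mmul n A (mone n) i j = A i j"
    using tri_entry_zero[OF assms, of i j] by auto
qed

lemma mpow_Suc_left:
  assumes "A \<in> tri n UNIV" shows "mpow n A (Suc k) = mmul n A (mpow n A k)"
proof (induction k)
  case 0 then show ?case using assms by (simp only: mpow.simps mmul_mone_left mmul_mone_right)
next
  case (Suc k)
  have "mpow n A (Suc (Suc k)) = mmul n (mpow n A (Suc k)) A"
    by simp
  also have "\<dots> = mmul n (mmul n A (mpow n A k)) A"
    by (simp only: Suc)
  also have "\<dots> = mmul n A (mpow n A (Suc k))"
    by (simp only: mmul_assoc mpow.simps(2))
  finally show ?case .
qed

lemma mmul_tri_eq_sum:
  assumes "A \<in> tri n UNIV" "B \<in> tri n UNIV" "x \<le> y" "y < n"
  shows "mmul n A B x y = (\<Sum>u=x..y. A x u * B u y)"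
  unfolding mmul_def
proof (rule sum.mono_neutral_right)
  show "\<forall>u\<in>{..<n} - {x..y}. A x u * B u y = 0"
    using assms by (auto simp: tri_entry_zero)
qed (use assms in auto)

lemma mpow_block_eq:
  assumes A: "A \<in> tri n UNIV" and B: "B \<in> tri m UNIV" and "s + t < n" "r + t < m"
    and AB: "\<And>x y. x \<le> y \<Longrightarrow> y \<le> t \<Longrightarrow> A (s + x) (s + y) = B (r + x) (r + y)"
  shows "x \<le> y \<Longrightarrow> y \<le> t \<Longrightarrow> mpow n A k (s + x) (s + y) = mpow m B k (r + x) (r + y)"
proof (induction k arbitrary: x y)
  case 0
  then show ?case using assms by (auto simp: mone_def)
next
  case (Suc k)
  have "mpow n A (Suc k) (s + x) (s + y) = (\<Sum>u=s+x..s+y. mpow n A k (s + x) u * A u (s + y))"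
    using mmul_tri_eq_sum[OF mpow_tri[OF A] A] Suc.prems assms by simp
  also have "\<dots> = (\<Sum>u=x..y. mpow n A k (s + x) (s + u) * A (s + u) (s + y))"
    by (simp only: add.commute[of s] sum.shift_bounds_cl_nat_ivl)
  also have "\<dots> = (\<Sum>u=x..y. mpow m B k (r + x) (r + u) * B (r + u) (r + y))"
    using Suc AB by (intro sum.cong) auto
  also have "\<dots> = (\<Sum>u=r+x..r+y. mpow m B k (r + x) u * B u (r + y))"
    by (simp only: add.commute[of r] sum.shift_bounds_cl_nat_ivl)
  also have "\<dots> = mpow m B (Suc k) (r + x) (r + y)"
    using mmul_tri_eq_sum[OF mpow_tri[OF B] B] Suc.prems assms by simp
  finally show ?case .
qed

definition shift_block :: "nat \<Rightarrow> nat \<Rightarrow> nat \<Rightarrow> 'a::zero sqmat \<Rightarrow> 'a sqmat" where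
  "shift_block p q t A =
     (\<lambda>x y. if p \<le> x \<and> x \<le> y \<and> y \<le> p + t then A (x - p + q) (y - p + q) else 0)"

lemma shift_block_tri:
  assumes "A \<in> tri m S" "0 \<in> S" "p + t < n"
  shows "shift_block p q t A \<in> tri n S"
  using assms tri_entry_mem[OF assms(1,2)] by (auto simp: tri_def shift_block_def)

lemma poly_mat_shift_block:
  assumes A: "A \<in> tri m UNIV" and "q + t < m" "p + t < n" "x \<le> y" "y \<le> t"
  shows "poly_mat n g (shift_block p q t A) (p + x) (p + y) = poly_mat m g A (q + x) (q + y)"
proof -
  have "mpow n (shift_block p q t A) k (p + x) (p + y) = mpow m A k (q + x) (q + y)" for k
    by (rule mpow_block_eq[OF shift_block_tri[OF A] A])
      (use assms in \<open>auto simp: shift_block_def add.commute\<close>)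
  then show ?thesis by (simp add: poly_mat_def)
qed

lemma poly_mat_zero_row:
  assumes C: "C \<in> tri n UNIV" and row: "\<And>y. C x y = 0" and "x \<noteq> y"
  shows "poly_mat n g C x y = 0"
proof -
  have "mpow n C k x y = 0" for k
    using \<open>x \<noteq> y\<close>
    by (cases k) (simp_all add: mpow_Suc_left[OF C] mmul_def row mone_def del: mpow.simps(2))
  then show ?thesis by (simp add: poly_mat_def)
qed

lemma IntK_T_iff_entries:
  "g \<in> IntK_T m D \<longleftrightarrow> (\<forall>B \<in> tri m D. \<forall>a b. a \<le> b \<and> b < m \<longrightarrow> poly_mat m g B a b \<in> D)"
proof -
  have "poly_mat m g B \<in> tri m D \<longleftrightarrow> (\<forall>a b. a \<le> b \<and> b < m \<longrightarrow> poly_mat m g B a b \<in> D)"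
    if "B \<in> tri m D" for B
    using poly_mat_tri[OF tri_UNIV_if_tri[OF that]] tri_iff[of _ m D] by blast
  then show ?thesis unfolding IntK_T_def by blast
qed

lemma poly_mat_mem_if_IntK_T:
  assumes g: "g \<in> IntK_T (n - l) D" and A: "A \<in> tri n D" and "0 \<in> D"
    and "l \<le> x" "x \<le> y" "y < n"
  shows "poly_mat n g A x y \<in> D"
proof -
  define B where "B = shift_block 0 l (n - 1 - l) A"
  have "B \<in> tri (n - l) D"
    unfolding B_def by (rule shift_block_tri[OF A]) (use assms in auto)
  then have "poly_mat (n - l) g B (0 + (x - l)) (0 + (y - l)) \<in> D"
    using g \<open>0 \<in> D\<close> by (auto simp: IntK_T_def intro: tri_entry_mem)
  also have "poly_mat (n - l) g B (0 + (x - l)) (0 + (y - l)) =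
             poly_mat n g A (l + (x - l)) (l + (y - l))"
    unfolding B_def by (rule poly_mat_shift_block[OF tri_UNIV_if_tri[OF A]]) (use assms in auto)
  finally show ?thesis using assms by simp
qed

lemma coeff_entry_poly: "coeff (entry_poly N F i j) k = (if k \<le> N then F k i j else 0)"
  unfolding entry_poly_def by (simp add: coeff_sum coeff_monom)

lemma degree_entry_poly: "degree (entry_poly N F i j) \<le> N"
  by (rule degree_le) (simp add: coeff_entry_poly)

lemma poly_mat_eq_sum_atMost:
  assumes "degree g \<le> M"
  shows "poly_mat n g C i j = (\<Sum>k\<le>M. coeff g k * mpow n C k i j)"
  unfolding poly_mat_def
  by (rule sum.mono_neutral_left) (use assms in \<open>auto simp: coeff_eq_0\<close>)

lemma right_subst_entry:
  "right_subst n N F C i j = (\<Sum>l<n. poly_mat n (entry_poly N F i l) C l j)"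
proof -
  have "right_subst n N F C i j = (\<Sum>k\<le>N. \<Sum>l<n. F k i l * mpow n C k l j)"
    by (simp add: right_subst_def mmul_def)
  also have "\<dots> = (\<Sum>l<n. \<Sum>k\<le>N. F k i l * mpow n C k l j)"
    by (rule sum.swap)
  also have "\<dots> = (\<Sum>l<n. poly_mat n (entry_poly N F i l) C l j)"
    by (simp add: poly_mat_eq_sum_atMost[OF degree_entry_poly] coeff_entry_poly)
  finally show ?thesis .
qed

lemma right_subst_tri:
  assumes "\<forall>k. F k \<in> tri n UNIV" "C \<in> tri n UNIV"
  shows "right_subst n N F C \<in> tri n UNIV"
  unfolding right_subst_def using assms by (intro tri_sum mmul_tri mpow_tri) auto

lemma left_subst_tri:
  assumes "\<forall>k. F k \<in> tri n UNIV" "C \<in> tri n UNIV"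
  shows "left_subst n N F C \<in> tri n UNIV"
  unfolding left_subst_def using assms by (intro tri_sum mmul_tri mpow_tri) auto

text \<open>\<open>J A\<^sup>T J\<close> for the reversal matrix \<open>J\<close>: an anti-automorphism of \<open>T\<^sub>n(K)\<close>.\<close>

definition rev_transpose :: "nat \<Rightarrow> 'a::zero sqmat \<Rightarrow> 'a sqmat" where
  "rev_transpose n A = (\<lambda>i j. if i < n \<and> j < n then A (n - 1 - j) (n - 1 - i) else 0)"

lemma rev_transpose_tri:
  assumes A: "A \<in> tri n S" shows "rev_transpose n A \<in> tri n S"
proof -
  have upper: "A i j \<in> S" if "i \<le> j" "j < n" for i j
    using A that by (simp add: tri_def)
  have lower: "i \<le> j" if "A (n - 1 - j) (n - 1 - i) \<noteq> 0" "i < n" "j < n" for i j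
    using that tri_entry_zero[OF tri_UNIV_if_tri[OF A], of "n - 1 - j" "n - 1 - i"]
    by (cases "n - 1 - j \<le> n - 1 - i") linarith+
  show ?thesis unfolding tri_def
  proof (rule CollectI, rule conjI; intro allI impI)
    fix i j assume "rev_transpose n A i j \<noteq> 0"
    then have "i < n" "j < n" "A (n - 1 - j) (n - 1 - i) \<noteq> 0"
      by (simp_all add: rev_transpose_def split: if_splits)
    then show "i \<le> j \<and> j < n" using lower by blast
  next
    fix i j assume ij: "i \<le> j \<and> j < n"
    then have "A (n - 1 - j) (n - 1 - i) \<in> S" by (intro upper) auto
    then show "rev_transpose n A i j \<in> S" using ij by (simp add: rev_transpose_def)
  qed
qed

lemma rev_transpose_rev_transpose: "A \<in> tri n UNIV \<Longrightarrow> rev_transpose n (rev_transpose n A) = A"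
  by (auto simp: rev_transpose_def tri_entry_zero intro!: ext)

lemma rev_transpose_mmul:
  "rev_transpose n (mmul n A B) = mmul n (rev_transpose n B) (rev_transpose n A)"
proof (intro ext)
  fix i j
  have "(\<Sum>l<n. B (n - 1 - l) (n - 1 - i) * A (n - 1 - j) (n - 1 - l)) =
        (\<Sum>l<n. A (n - 1 - j) l * B l (n - 1 - i))"
    using sum.nat_diff_reindex[of "\<lambda>l. A (n - 1 - j) l * B l (n - 1 - i)" n]
    by (simp add: mult.commute)
  then show "rev_transpose n (mmul n A B) i j = mmul n (rev_transpose n B) (rev_transpose n A) i j"
    by (auto simp: rev_transpose_def mmul_def intro: sum.cong)
qed

lemma rev_transpose_mone: "rev_transpose n (mone n) = mone n"
  by (auto simp: rev_transpose_def mone_def intro!: ext)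

lemma rev_transpose_mpow:
  assumes A: "A \<in> tri n UNIV"
  shows "rev_transpose n (mpow n A k) = mpow n (rev_transpose n A) k"
proof (induction k)
  case 0
  then show ?case by (simp add: rev_transpose_mone)
next
  case (Suc k)
  have "rev_transpose n (mpow n A (Suc k)) = mmul n (rev_transpose n A) (rev_transpose n (mpow n A k))"
    by (simp add: rev_transpose_mmul)
  also have "\<dots> = mpow n (rev_transpose n A) (Suc k)"
    by (simp only: Suc mpow_Suc_left[OF rev_transpose_tri[OF A]])
  finally show ?case .
qed

lemma rev_transpose_left_subst:
  assumes "C \<in> tri n UNIV"
  shows "rev_transpose n (left_subst n N F C) =
         right_subst n N (\<lambda>k. rev_transpose n (F k)) (rev_transpose n C)"
proof -
  have "rev_transpose n (left_subst n N F C) =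
        (\<lambda>i j. \<Sum>k\<le>N. rev_transpose n (mmul n (mpow n C k) (F k)) i j)"
    by (auto simp: rev_transpose_def left_subst_def intro!: ext)
  then show ?thesis
    by (simp add: rev_transpose_mmul rev_transpose_mpow[OF assms] right_subst_def)
qed

lemma entry_poly_rev_transpose:
  "i < n \<Longrightarrow> j < n \<Longrightarrow>
   entry_poly N (\<lambda>k. rev_transpose n (F k)) i j = entry_poly N F (n - 1 - j) (n - 1 - i)"
  by (simp add: entry_poly_def rev_transpose_def)

context
  fixes D :: "'a::field set"
  assumes zero_mem: "0 \<in> D"
    and add_mem: "\<And>a b. a \<in> D \<Longrightarrow> b \<in> D \<Longrightarrow> a + b \<in> D"
    and diff_mem: "\<And>a b. a \<in> D \<Longrightarrow> b \<in> D \<Longrightarrow> a - b \<in> D"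
begin

lemma sum_mem: "finite S \<Longrightarrow> (\<And>x. x \<in> S \<Longrightarrow> f x \<in> D) \<Longrightarrow> sum f S \<in> D"
  by (induction S rule: finite_induct) (auto intro: zero_mem add_mem)

lemma summand_mem:
  assumes "finite S" "l \<in> S" "sum f S \<in> D" and others: "\<And>x. x \<in> S \<Longrightarrow> x \<noteq> l \<Longrightarrow> f x \<in> D"
  shows "f l \<in> D"
proof -
  have "f l = sum f S - sum f (S - {l})"
    using sum.remove[OF assms(1,2), of f] by simp
  then show ?thesis
    using assms by (auto intro: diff_mem sum_mem)
qed

lemma right_subst_closed_if_IntK_T:
  assumes F: "\<forall>k. F k \<in> tri n UNIV"
    and ints: "\<forall>i j. i \<le> j \<and> j < n \<longrightarrow> entry_poly N F i j \<in> IntK_T (n - j) D"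
    and C: "C \<in> tri n D"
  shows "right_subst n N F C \<in> tri n D"
proof -
  have CU: "C \<in> tri n UNIV" using tri_UNIV_if_tri[OF C] .
  have "poly_mat n (entry_poly N F i l) C l j \<in> D" if "i \<le> j" "j < n" "l < n" for i j l
  proof (cases "i \<le> l \<and> l \<le> j")
    case True
    then show ?thesis
      using ints that by (intro poly_mat_mem_if_IntK_T[where l=l, OF _ C zero_mem]) auto
  next
    case False
    then consider "l < i" | "j < l" by linarith
    then show ?thesis
    proof cases
      case 1
      then have "entry_poly N F i l = 0"
        using tri_entry_zero[OF F[rule_format]] by (simp add: entry_poly_def)
      then show ?thesis using zero_mem by (simp add: poly_mat_def)
    next
      case 2
      then show ?thesis using tri_entry_zero[OF poly_mat_tri[OF CU]] zero_mem by simp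
    qed
  qed
  then show ?thesis
    using right_subst_tri[OF F CU] by (auto simp: tri_iff[of _ n D] right_subst_entry intro!: sum_mem)
qed

text \<open>The test matrix \<open>C\<close> carries a block of \<open>B\<close> from row \<open>j\<close> on and
  has zero rows above \<open>j\<close>; in the expansion of \<open>f(C)\<close> at \<open>(i, j + t)\<close> the terms of \<open>f\<^sub>i\<^sub>l\<close> vanish
  for \<open>l < j\<close> and lie in \<open>D\<close> by induction for \<open>l > j\<close>, hence so does the term of \<open>f\<^sub>i\<^sub>j\<close>.\<close>

lemma IntK_T_if_right_subst_closed:
  assumes F: "\<forall>k. F k \<in> tri n UNIV"
    and closed: "\<forall>C\<in>tri n D. right_subst n N F C \<in> tri n D"
  shows "i \<le> j \<Longrightarrow> j < n \<Longrightarrow> entry_poly N F i j \<in> IntK_T (n - j) D"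
proof (induction "n - j" arbitrary: j rule: less_induct)
  case less
  show ?case unfolding IntK_T_iff_entries
  proof (intro ballI allI impI)
    fix B a b assume B: "B \<in> tri (n - j) D" and ab: "a \<le> b \<and> b < n - j"
    define t where "t = b - a"
    define C where "C = shift_block j a t B"
    define T where "T l = poly_mat n (entry_poly N F i l) C l (j + t)" for l
    have bound: "j + t < n" using ab unfolding t_def by linarith
    have C: "C \<in> tri n D" and CU: "C \<in> tri n UNIV"
      unfolding C_def using shift_block_tri[OF B zero_mem bound] tri_UNIV_if_tri by blast+
    have "right_subst n N F C i (j + t) \<in> D"
      using closed C bound less.prems by (auto intro: tri_entry_mem zero_mem)
    then have "sum T {..<n} \<in> D"
      by (simp add: right_subst_entry T_def)
    moreover have "T l \<in> D" if "l < n" "l \<noteq> j" for l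
    proof -
      consider "l < j" | "j < l" "l \<le> j + t" | "j + t < l" using \<open>l \<noteq> j\<close> by linarith
      then show ?thesis
      proof cases
        case 1
        then have "T l = 0"
          unfolding T_def by (intro poly_mat_zero_row[OF CU]) (auto simp: C_def shift_block_def)
        then show ?thesis using zero_mem by simp
      next
        case 2
        then have "n - l < n - j" using that by linarith
        then have "entry_poly N F i l \<in> IntK_T (n - l) D"
          by (rule less.hyps) (use 2 that less.prems in auto)
        then show ?thesis
          unfolding T_def using 2 bound
          by (intro poly_mat_mem_if_IntK_T[where l=l, OF _ C zero_mem]) auto
      next
        case 3
        then show ?thesis
          unfolding T_def using tri_entry_zero[OF poly_mat_tri[OF CU]] zero_mem by simp
      qed
    qed
    ultimately have "T j \<in> D"
      using less.prems by (intro summand_mem[of "{..<n}" j T]) auto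
    moreover have "T j = poly_mat (n - j) (entry_poly N F i j) B (a + 0) (a + t)"
      using poly_mat_shift_block[OF tri_UNIV_if_tri[OF B] _ bound, where x=0 and y=t] ab
      by (simp add: T_def C_def t_def)
    ultimately show "poly_mat (n - j) (entry_poly N F i j) B a b \<in> D"
      using ab by (simp add: t_def)
  qed
qed

lemma right_subst_closed_iff:
  assumes "\<forall>k. F k \<in> tri n UNIV"
  shows "(\<forall>C\<in>tri n D. right_subst n N F C \<in> tri n D) \<longleftrightarrow>
         (\<forall>i j. i \<le> j \<and> j < n \<longrightarrow> entry_poly N F i j \<in> IntK_T (n - j) D)"
  using assms right_subst_closed_if_IntK_T IntK_T_if_right_subst_closed by blast

lemma left_subst_closed_iff_right_subst_closed:
  assumes F: "\<forall>k. F k \<in> tri n UNIV"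
  shows "(\<forall>C\<in>tri n D. left_subst n N F C \<in> tri n D) \<longleftrightarrow>
         (\<forall>C\<in>tri n D. right_subst n N (\<lambda>k. rev_transpose n (F k)) C \<in> tri n D)"
proof
  assume left: "\<forall>C\<in>tri n D. left_subst n N F C \<in> tri n D"
  show "\<forall>C\<in>tri n D. right_subst n N (\<lambda>k. rev_transpose n (F k)) C \<in> tri n D"
  proof
    fix C assume C: "C \<in> tri n D"
    have "right_subst n N (\<lambda>k. rev_transpose n (F k)) C =
          rev_transpose n (left_subst n N F (rev_transpose n C))"
      using rev_transpose_left_subst[OF rev_transpose_tri[OF tri_UNIV_if_tri[OF C]]]
      by (simp add: rev_transpose_rev_transpose[OF tri_UNIV_if_tri[OF C]])
    then show "right_subst n N (\<lambda>k. rev_transpose n (F k)) C \<in> tri n D"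
      using left rev_transpose_tri[OF C] by (simp add: rev_transpose_tri)
  qed
next
  assume right: "\<forall>C\<in>tri n D. right_subst n N (\<lambda>k. rev_transpose n (F k)) C \<in> tri n D"
  show "\<forall>C\<in>tri n D. left_subst n N F C \<in> tri n D"
  proof
    fix C assume C: "C \<in> tri n D"
    have CU: "C \<in> tri n UNIV" using tri_UNIV_if_tri[OF C] .
    have "left_subst n N F C =
          rev_transpose n (right_subst n N (\<lambda>k. rev_transpose n (F k)) (rev_transpose n C))"
      using rev_transpose_rev_transpose[OF left_subst_tri[OF F CU]]
      by (simp add: rev_transpose_left_subst[OF CU])
    then show "left_subst n N F C \<in> tri n D"
      using right rev_transpose_tri[OF C] by (simp add: rev_transpose_tri)
  qed
qed

lemma left_subst_closed_iff:
  assumes F: "\<forall>k. F k \<in> tri n UNIV"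
  shows "(\<forall>C\<in>tri n D. left_subst n N F C \<in> tri n D) \<longleftrightarrow>
         (\<forall>i j. i \<le> j \<and> j < n \<longrightarrow> entry_poly N F i j \<in> IntK_T (i + 1) D)"
proof -
  have "(\<forall>C\<in>tri n D. left_subst n N F C \<in> tri n D) \<longleftrightarrow>
        (\<forall>i j. i \<le> j \<and> j < n \<longrightarrow> entry_poly N F (n - 1 - j) (n - 1 - i) \<in> IntK_T (n - j) D)"
  proof -
    have "\<forall>k. rev_transpose n (F k) \<in> tri n UNIV" using F rev_transpose_tri by blast
    from right_subst_closed_iff[OF this] show ?thesis
      by (simp add: left_subst_closed_iff_right_subst_closed[OF F] entry_poly_rev_transpose)
  qed
  also have "\<dots> \<longleftrightarrow> (\<forall>i j. i \<le> j \<and> j < n \<longrightarrow> entry_poly N F i j \<in> IntK_T (i + 1) D)"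
  proof (intro iffI allI impI)
    fix i j
    assume hyp: "\<forall>i j. i \<le> j \<and> j < n \<longrightarrow> entry_poly N F (n - 1 - j) (n - 1 - i) \<in> IntK_T (n - j) D"
      and ij: "i \<le> j \<and> j < n"
    have "n - 1 - j \<le> n - 1 - i \<and> n - 1 - i < n" using ij by linarith
    then have "entry_poly N F (n - 1 - (n - 1 - i)) (n - 1 - (n - 1 - j))
                 \<in> IntK_T (n - (n - 1 - i)) D"
      using hyp by blast
    moreover have "n - 1 - (n - 1 - i) = i" "n - 1 - (n - 1 - j) = j" "n - (n - 1 - i) = i + 1"
      using ij by linarith+
    ultimately show "entry_poly N F i j \<in> IntK_T (i + 1) D" by simp
  next
    fix i j
    assume hyp: "\<forall>i j. i \<le> j \<and> j < n \<longrightarrow> entry_poly N F i j \<in> IntK_T (i + 1) D"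
      and ij: "i \<le> j \<and> j < n"
    have "n - 1 - j \<le> n - 1 - i \<and> n - 1 - i < n" using ij by linarith
    then have "entry_poly N F (n - 1 - j) (n - 1 - i) \<in> IntK_T (n - 1 - j + 1) D"
      using hyp by blast
    moreover have "n - 1 - j + 1 = n - j" using ij by linarith
    ultimately show "entry_poly N F (n - 1 - j) (n - 1 - i) \<in> IntK_T (n - j) D" by simp
  qed
  finally show ?thesis .
qed

end

theorem corollary5p3:
  fixes D :: "'a::field set" and n N :: nat and F :: "nat \<Rightarrow> 'a sqmat"
  assumes "is_domain_with_quotient_field D"
    and "n \<ge> 1"
    and "\<forall>k. F k \<in> tri n UNIV"
    and "\<forall>k>N. \<forall>i j. F k i j = 0"
  shows "((\<forall>C \<in> tri n D. right_subst n N F C \<in> tri n D) \<longleftrightarrow>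
            (\<forall>i j. i \<le> j \<and> j < n \<longrightarrow> entry_poly N F i j \<in> IntK_T (n - j) D))
       \<and> ((\<forall>C \<in> tri n D. left_subst n N F C \<in> tri n D) \<longleftrightarrow>
            (\<forall>i j. i \<le> j \<and> j < n \<longrightarrow> entry_poly N F i j \<in> IntK_T (i + 1) D))"
proof -
  have D: "0 \<in> D" "\<And>a b. a \<in> D \<Longrightarrow> b \<in> D \<Longrightarrow> a + b \<in> D"
    "\<And>a b. a \<in> D \<Longrightarrow> b \<in> D \<Longrightarrow> a - b \<in> D"
    using assms(1) unfolding is_domain_with_quotient_field_def by auto
  show ?thesis
    using right_subst_closed_iff[OF D assms(3)] left_subst_closed_iff[OF D assms(3)] by (rule conjI)
qed

end
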